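(* For every $k\ge1$ and every smooth periodic function $y$, with $Y=\mathrm{diag}(y(x_0),\dots,y(x_{N-1}))$, the commutator $[D_k,Y]=D_kY-YD_k$ has height at most $k-1$, i.e. $\mathrm{ht}([D_k,Y])\le k-1$.
   Context: Uniform periodic grid $x_j=a+(b-a)\frac jN$, $j=0,\dots,N-1$. $D_F=N\cdot M$ where $M$ is the $N\times N$ circulant matrix with $-1$ on the diagonal, $1$ on the superdiagonal and $1$ in the bottom-left corner (so $(D_Fu)_j=N(u_{j+1}-u_j)$ with periodic indices); $D_B=-D_F^\dagger$; $D_2=D_BD_F=D_FD_B$ ($N^2$ times the periodic circulant with $-2$ on the diagonal and $1$ on both off-diagonals). Higher differences: $D_k=D_2^{k/2}$ for $k$ even and $D_k=D_FD_2^{(k-1)/2}$ for $k$ odd. An $N\times N$ matrix (family indexed by $N$) $P$ has height $m$ if $m$ is the highest order such that $\|P\|_2$ grows as $N^m$ as $N\to\infty$; thus $\mathrm{ht}(P)\le m$ means $\|P\|_2=O(N^m)$ as $N\to\infty$. *)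

theory Defs
  imports "HOL-Analysis.Analysis" "HOL-Library.Landau_Symbols" "Jordan_Normal_Form.Matrix"
begin

definition smooth_fun :: "(real \<Rightarrow> real) \<Rightarrow> bool" where
  "smooth_fun y \<longleftrightarrow> (\<forall>n x. ((deriv ^^ n) y) differentiable (at x))"

definition periodic_fun :: "real \<Rightarrow> (real \<Rightarrow> real) \<Rightarrow> bool" where
  "periodic_fun p y \<longleftrightarrow> (\<forall>x. y (x + p) = y x)"

definition grid_pt :: "real \<Rightarrow> real \<Rightarrow> nat \<Rightarrow> nat \<Rightarrow> real" where
  "grid_pt a b N j = a + (b - a) * real j / real N"

text \<open>Forward difference D_F = N * M, M circulant: -1 on diagonal, 1 on superdiagonal
  and in the bottom-left corner, i.e. (D_F u)_j = N (u_{j+1} - u_j), indices mod N.\<close>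
definition DF :: "nat \<Rightarrow> real mat" where
  "DF N = real N \<cdot>\<^sub>m mat N N (\<lambda>(i,j). (if j = (i + 1) mod N then 1 else 0) - (if i = j then 1 else 0))"

definition DB :: "nat \<Rightarrow> real mat" where
  "DB N = - (transpose_mat (DF N))"

definition D2 :: "nat \<Rightarrow> real mat" where
  "D2 N = DB N * DF N"

definition Dk :: "nat \<Rightarrow> nat \<Rightarrow> real mat" where
  "Dk k N = (if even k then D2 N ^\<^sub>m (k div 2) else DF N * D2 N ^\<^sub>m ((k - 1) div 2))"

definition grid_diag :: "(real \<Rightarrow> real) \<Rightarrow> real \<Rightarrow> real \<Rightarrow> nat \<Rightarrow> real mat" where
  "grid_diag y a b N = mat N N (\<lambda>(i,j). if i = j then y (grid_pt a b N i) else 0)"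

definition vnorm2 :: "real vec \<Rightarrow> real" where
  "vnorm2 v = sqrt (\<Sum>i<dim_vec v. (v $ i)\<^sup>2)"

definition opnorm2 :: "real mat \<Rightarrow> real" where
  "opnorm2 A = Sup {vnorm2 (A *\<^sub>v v) | v. dim_vec v = dim_col A \<and> vnorm2 v \<le> 1}"

definition height_le :: "(nat \<Rightarrow> real mat) \<Rightarrow> nat \<Rightarrow> bool" where
  "height_le P m \<longleftrightarrow> (\<lambda>N. opnorm2 (P N)) \<in> O(\<lambda>N. real N ^ m)"

end

theory Submission
  imports Defs
begin

(*
  Write D_F = N (S - I) and D_B = N (I - S^T) with S the cyclic shift; both have 2-norm at most 2N.
  For Y = diag (y x_j), the commutators [D_F, Y] and [D_B, Y] are supported on a permutation pattern
  with entries N (y x_(j+1) - y x_j), so by the Lipschitz continuity of y on [a, b] (and periodicity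
  for the wrap-around entry) their norms are bounded by C = L (b - a), uniformly in N.  Since D_k is
  a product of k factors D_F and D_B, the Leibniz rule [A B, Y] = A [B, Y] + [A, Y] B gives
  norm [D_k, Y] <= k C (2 N)^(k - 1).
*)

lemma vnorm2_eq_L2_set: "vnorm2 v = L2_set (\<lambda>i. v $ i) {..<dim_vec v}"
  unfolding vnorm2_def L2_set_def by simp

lemma vnorm2_zero [simp]: "vnorm2 (0\<^sub>v n) = 0"
  unfolding vnorm2_def by simp

lemma vnorm2_add_le:
  assumes "dim_vec u = dim_vec w"
  shows "vnorm2 (u + w) \<le> vnorm2 u + vnorm2 w"
proof -
  have "vnorm2 (u + w) = L2_set (\<lambda>i. u $ i + w $ i) {..<dim_vec w}"
    unfolding vnorm2_eq_L2_set using assms by (intro L2_set_cong) auto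
  also have "\<dots> \<le> L2_set (\<lambda>i. u $ i) {..<dim_vec w} + L2_set (\<lambda>i. w $ i) {..<dim_vec w}"
    by (rule L2_set_triangle_ineq)
  finally show ?thesis
    unfolding vnorm2_eq_L2_set using assms by simp
qed

lemma vnorm2_smult: "vnorm2 (c \<cdot>\<^sub>v u) = \<bar>c\<bar> * vnorm2 u"
proof -
  have "vnorm2 (c \<cdot>\<^sub>v u) = L2_set (\<lambda>i. \<bar>c\<bar> * u $ i) {..<dim_vec u}"
    unfolding vnorm2_eq_L2_set L2_set_def
    by (intro arg_cong[where f = sqrt] sum.cong) (auto simp: power_mult_distrib)
  also have "\<dots> = \<bar>c\<bar> * vnorm2 u"
    unfolding vnorm2_eq_L2_set by (simp add: L2_set_right_distrib)
  finally show ?thesis .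
qed

(* Explicit bounds compose without reasoning about the supremum in opnorm2. *)
definition op_bound :: "real mat \<Rightarrow> real \<Rightarrow> bool" where
  "op_bound A c \<longleftrightarrow> (\<forall>v. dim_vec v = dim_col A \<longrightarrow> vnorm2 (A *\<^sub>v v) \<le> c * vnorm2 v)"

lemma op_boundI:
  "(\<And>v. dim_vec v = dim_col A \<Longrightarrow> vnorm2 (A *\<^sub>v v) \<le> c * vnorm2 v) \<Longrightarrow> op_bound A c"
  unfolding op_bound_def by blast

lemma op_boundD: "op_bound A c \<Longrightarrow> dim_vec v = dim_col A \<Longrightarrow> vnorm2 (A *\<^sub>v v) \<le> c * vnorm2 v"
  unfolding op_bound_def by blast

lemma abs_opnorm2_le:
  assumes "op_bound A c" "0 \<le> c"
  shows "\<bar>opnorm2 A\<bar> \<le> c"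
proof -
  define S where "S = {vnorm2 (A *\<^sub>v v) | v. dim_vec v = dim_col A \<and> vnorm2 v \<le> 1}"
  have "A *\<^sub>v 0\<^sub>v (dim_col A) = 0\<^sub>v (dim_row A)"
    by (intro eq_vecI) auto
  then have "0 \<in> S"
    unfolding S_def by (intro CollectI exI[of _ "0\<^sub>v (dim_col A)"]) auto
  have S_le: "x \<le> c" if "x \<in> S" for x
  proof -
    obtain v where v: "dim_vec v = dim_col A" "vnorm2 v \<le> 1" "x = vnorm2 (A *\<^sub>v v)"
      using \<open>x \<in> S\<close> unfolding S_def by blast
    have "x \<le> c * vnorm2 v"
      using op_boundD[OF assms(1) v(1)] v(3) by simp
    also have "\<dots> \<le> c"
      using v(2) assms(2) by (simp add: mult_left_le)
    finally show ?thesis .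
  qed
  have "bdd_above S"
    unfolding bdd_above_def using S_le by blast
  then have "0 \<le> Sup S"
    using \<open>0 \<in> S\<close> by (intro cSup_upper2) auto
  moreover have "Sup S \<le> c"
    using \<open>0 \<in> S\<close> S_le by (intro cSup_least) auto
  ultimately show ?thesis
    unfolding opnorm2_def S_def[symmetric] by simp
qed

lemma op_bound_zero: "op_bound (0\<^sub>m n n) 0"
proof (rule op_boundI)
  fix v :: "real vec"
  assume "dim_vec v = dim_col (0\<^sub>m n n)"
  then have "0\<^sub>m n n *\<^sub>v v = 0\<^sub>v n"
    by (intro eq_vecI) auto
  then show "vnorm2 (0\<^sub>m n n *\<^sub>v v) \<le> 0 * vnorm2 v"
    by simp
qed

lemma op_bound_mult:
  assumes A: "A \<in> carrier_mat n n" and B: "B \<in> carrier_mat n n"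
    and "op_bound A c" "op_bound B d" "0 \<le> c"
  shows "op_bound (A * B) (c * d)"
proof (rule op_boundI)
  fix v :: "real vec"
  assume "dim_vec v = dim_col (A * B)"
  then have v: "v \<in> carrier_vec n"
    using B by (intro carrier_vecI) simp
  have "vnorm2 ((A * B) *\<^sub>v v) = vnorm2 (A *\<^sub>v (B *\<^sub>v v))"
    using assoc_mult_mat_vec[OF A B v] by simp
  also have "\<dots> \<le> c * vnorm2 (B *\<^sub>v v)"
    using A B by (intro op_boundD[OF assms(3)]) simp
  also have "\<dots> \<le> c * (d * vnorm2 v)"
    using B v by (intro mult_left_mono op_boundD[OF assms(4)] assms(5)) simp
  finally show "vnorm2 ((A * B) *\<^sub>v v) \<le> c * d * vnorm2 v"
    by simp
qed

lemma op_bound_add: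
  assumes A: "A \<in> carrier_mat n n" and B: "B \<in> carrier_mat n n"
    and "op_bound A c" "op_bound B d"
  shows "op_bound (A + B) (c + d)"
proof (rule op_boundI)
  fix v :: "real vec"
  assume "dim_vec v = dim_col (A + B)"
  then have v: "v \<in> carrier_vec n"
    using B by (intro carrier_vecI) simp
  have "vnorm2 ((A + B) *\<^sub>v v) \<le> vnorm2 (A *\<^sub>v v) + vnorm2 (B *\<^sub>v v)"
    using A B v by (simp add: add_mult_distrib_mat_vec vnorm2_add_le)
  also have "\<dots> \<le> c * vnorm2 v + d * vnorm2 v"
    using A B v by (intro add_mono op_boundD[OF assms(3)] op_boundD[OF assms(4)]) simp_all
  finally show "vnorm2 ((A + B) *\<^sub>v v) \<le> (c + d) * vnorm2 v"
    by (simp add: algebra_simps)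
qed

lemma smult_mat_mult_vec: "(c \<cdot>\<^sub>m A) *\<^sub>v v = c \<cdot>\<^sub>v (A *\<^sub>v v)"
  if "dim_vec v = dim_col A" for A :: "real mat"
proof (rule eq_vecI)
  fix i
  assume "i < dim_vec (c \<cdot>\<^sub>v (A *\<^sub>v v))"
  then have i: "i < dim_row A"
    by simp
  have "((c \<cdot>\<^sub>m A) *\<^sub>v v) $ i = (c \<cdot>\<^sub>v row A i) \<bullet> v"
    using i by simp
  also have "\<dots> = c * (row A i \<bullet> v)"
    using i that by (intro smult_scalar_prod_distrib[of _ "dim_col A"]) (auto intro: carrier_vecI)
  finally show "((c \<cdot>\<^sub>m A) *\<^sub>v v) $ i = (c \<cdot>\<^sub>v (A *\<^sub>v v)) $ i"
    using i by simp
qed simp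

lemma op_bound_smult: "op_bound A d \<Longrightarrow> op_bound (c \<cdot>\<^sub>m A) (\<bar>c\<bar> * d)"
  unfolding op_bound_def
  by (auto simp: smult_mat_mult_vec vnorm2_smult mult.assoc intro!: mult_left_mono)

lemma op_bound_diff:
  assumes A: "A \<in> carrier_mat n n" and B: "B \<in> carrier_mat n n"
    and "op_bound A c" "op_bound B d"
  shows "op_bound (A - B) (c + d)"
proof -
  have "A - B = A + (-1) \<cdot>\<^sub>m B"
    using A B by (intro eq_matI) auto
  then show ?thesis
    using op_bound_add[OF A _ assms(3) op_bound_smult[OF assms(4), of "-1"]] B by simp
qed

lemma op_bound_pow:
  assumes A: "A \<in> carrier_mat n n" and "op_bound A c" "0 \<le> c"
  shows "op_bound (A ^\<^sub>m m) (c ^ m)"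
proof (induction m)
  case 0
  show ?case
  proof (rule op_boundI)
    fix v :: "real vec"
    assume "dim_vec v = dim_col (A ^\<^sub>m 0)"
    then have "v \<in> carrier_vec n"
      using A by (intro carrier_vecI) simp
    then show "vnorm2 ((A ^\<^sub>m 0) *\<^sub>v v) \<le> c ^ 0 * vnorm2 v"
      using A by simp
  qed
next
  case (Suc m)
  show ?case
    using op_bound_mult[OF pow_carrier_mat[OF A] A Suc assms(2)] assms(3)
    by (simp add: mult.commute)
qed

lemma op_bound_perm_pattern:
  fixes A :: "real mat"
  assumes A: "A \<in> carrier_mat n n" and \<sigma>: "bij_betw \<sigma> {..<n} {..<n}"
    and zero: "\<And>i j. i < n \<Longrightarrow> j < n \<Longrightarrow> j \<noteq> \<sigma> i \<Longrightarrow> A $$ (i, j) = 0"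
    and bound: "\<And>i. i < n \<Longrightarrow> \<bar>A $$ (i, \<sigma> i)\<bar> \<le> c" and "0 \<le> c"
  shows "op_bound A c"
proof (rule op_boundI)
  fix v :: "real vec"
  assume "dim_vec v = dim_col A"
  then have v: "dim_vec v = n"
    using A by simp
  have \<sigma>_lt: "\<sigma> i < n" if "i < n" for i
    using \<sigma> that by (auto simp: bij_betw_def)
  have entry: "(A *\<^sub>v v) $ i = A $$ (i, \<sigma> i) * v $ \<sigma> i" if i: "i < n" for i
  proof -
    have "(A *\<^sub>v v) $ i = (\<Sum>j<n. A $$ (i, j) * v $ j)"
      using A i v by (simp add: scalar_prod_def lessThan_atLeast0)
    also have "\<dots> = (\<Sum>j<n. if j = \<sigma> i then A $$ (i, \<sigma> i) * v $ \<sigma> i else 0)"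
      using zero i by (intro sum.cong) auto
    finally show ?thesis
      using \<sigma>_lt[OF i] by simp
  qed
  have "(\<Sum>i<n. ((A *\<^sub>v v) $ i)\<^sup>2) \<le> (\<Sum>i<n. c\<^sup>2 * (v $ \<sigma> i)\<^sup>2)"
  proof (rule sum_mono)
    fix i
    assume "i \<in> {..<n}"
    then have "(A $$ (i, \<sigma> i))\<^sup>2 \<le> c\<^sup>2"
      using bound[of i] \<open>0 \<le> c\<close> abs_le_square_iff[of "A $$ (i, \<sigma> i)" c] by simp
    then show "((A *\<^sub>v v) $ i)\<^sup>2 \<le> c\<^sup>2 * (v $ \<sigma> i)\<^sup>2"
      using \<open>i \<in> {..<n}\<close> by (simp add: entry power_mult_distrib mult_right_mono)
  qed
  also have "\<dots> = c\<^sup>2 * (\<Sum>i<n. (v $ \<sigma> i)\<^sup>2)"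
    by (simp add: sum_distrib_left)
  also have "(\<Sum>i<n. (v $ \<sigma> i)\<^sup>2) = (\<Sum>j<n. (v $ j)\<^sup>2)"
    using sum.reindex_bij_betw[OF \<sigma>, of "\<lambda>j. (v $ j)\<^sup>2"] by simp
  finally have "sqrt (\<Sum>i<n. ((A *\<^sub>v v) $ i)\<^sup>2) \<le> sqrt (c\<^sup>2 * (\<Sum>j<n. (v $ j)\<^sup>2))"
    by simp
  then show "vnorm2 (A *\<^sub>v v) \<le> c * vnorm2 v"
    unfolding vnorm2_def using A v \<open>0 \<le> c\<close> by (simp add: real_sqrt_mult)
qed

definition commutator :: "real mat \<Rightarrow> real mat \<Rightarrow> real mat" where
  "commutator A Y = A * Y - Y * A"

lemma commutator_carrier:
  "A \<in> carrier_mat n n \<Longrightarrow> Y \<in> carrier_mat n n \<Longrightarrow> commutator A Y \<in> carrier_mat n n"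
  unfolding commutator_def by auto

lemma commutator_one: "Y \<in> carrier_mat n n \<Longrightarrow> commutator (1\<^sub>m n) Y = 0\<^sub>m n n"
  unfolding commutator_def by (intro eq_matI) auto

lemma commutator_mult:
  assumes A: "A \<in> carrier_mat n n" and B: "B \<in> carrier_mat n n" and Y: "Y \<in> carrier_mat n n"
  shows "commutator (A * B) Y = A * commutator B Y + commutator A Y * B"
proof -
  have "A * (B * Y - Y * B) = A * B * Y - A * Y * B"
    using A B Y mult_minus_distrib_mat[OF A mult_carrier_mat[OF B Y] mult_carrier_mat[OF Y B]]
    by (simp add: assoc_mult_mat[of _ n n _ n _ n])
  moreover have "(A * Y - Y * A) * B = A * Y * B - Y * (A * B)"
    using A B Y by (simp add: minus_mult_distrib_mat[of _ n n] assoc_mult_mat[of _ n n _ n _ n])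
  ultimately show ?thesis
    unfolding commutator_def using A B Y by (intro eq_matI) auto
qed

lemma commutator_mat_diag:
  assumes "A \<in> carrier_mat n n"
  shows "commutator A (mat_diag n w) = mat n n (\<lambda>(i, j). A $$ (i, j) * (w j - w i))"
  unfolding commutator_def mat_diag_mult_left[OF assms] mat_diag_mult_right[OF assms]
  by (intro eq_matI) (auto simp: algebra_simps)

lemma op_bound_commutator_mult:
  assumes A: "A \<in> carrier_mat n n" and B: "B \<in> carrier_mat n n" and Y: "Y \<in> carrier_mat n n"
    and "op_bound A \<alpha>" "op_bound B \<beta>" "op_bound (commutator A Y) \<gamma>" "op_bound (commutator B Y) \<delta>"
    and "0 \<le> \<alpha>" "0 \<le> \<gamma>"
  shows "op_bound (commutator (A * B) Y) (\<alpha> * \<delta> + \<gamma> * \<beta>)"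
  unfolding commutator_mult[OF A B Y]
  using assms
  by (intro op_bound_add[of _ n] op_bound_mult[of _ n] mult_carrier_mat[of _ n n _ n] commutator_carrier)

lemma op_bound_commutator_pow:
  assumes A: "A \<in> carrier_mat n n" and Y: "Y \<in> carrier_mat n n"
    and "op_bound A \<alpha>" "op_bound (commutator A Y) \<gamma>" "0 \<le> \<alpha>" "0 \<le> \<gamma>"
  shows "op_bound (commutator (A ^\<^sub>m m) Y) (real m * \<alpha> ^ (m - 1) * \<gamma>)"
proof (induction m)
  case 0
  show ?case
    using op_bound_zero[of n] commutator_one[OF Y] A by simp
next
  case (Suc m)
  have "op_bound (commutator (A ^\<^sub>m m * A) Y) (\<alpha> ^ m * \<gamma> + real m * \<alpha> ^ (m - 1) * \<gamma> * \<alpha>)"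
    using assms Suc by (intro op_bound_commutator_mult[of _ n] op_bound_pow) auto
  moreover have "\<alpha> ^ m * \<gamma> + real m * \<alpha> ^ (m - 1) * \<gamma> * \<alpha> = real (Suc m) * \<alpha> ^ m * \<gamma>"
    by (cases m) (simp_all add: algebra_simps)
  ultimately show ?case
    by simp
qed

lemma op_bound_one: "op_bound (1\<^sub>m n) 1"
  by (rule op_bound_perm_pattern[where \<sigma> = id]) auto

definition cyc_succ :: "nat \<Rightarrow> nat \<Rightarrow> nat" where
  "cyc_succ n i = Suc i mod n"

lemma cyc_succ_less [simp]: "i < n \<Longrightarrow> cyc_succ n i < n"
  unfolding cyc_succ_def by simp

lemma bij_betw_cyc_succ: "bij_betw (cyc_succ n) {..<n} {..<n}"
proof -
  have maps: "cyc_succ n ` {..<n} \<subseteq> {..<n}"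
    unfolding cyc_succ_def by auto
  have "inj_on (cyc_succ n) {..<n}"
  proof (rule inj_onI)
    fix i j
    assume "i \<in> {..<n}" "j \<in> {..<n}" "cyc_succ n i = cyc_succ n j"
    then show "i = j"
      unfolding cyc_succ_def
      by (cases "Suc i = n"; cases "Suc j = n") auto
  qed
  with maps show ?thesis
    unfolding bij_betw_def by (simp add: endo_inj_surj)
qed

lemma inv_into_cyc_succ_less [simp]: "i < n \<Longrightarrow> inv_into {..<n} (cyc_succ n) i < n"
  by (metis bij_betwE bij_betw_cyc_succ bij_betw_inv_into lessThan_iff)

lemma inv_into_cyc_succ [simp]: "j < n \<Longrightarrow> inv_into {..<n} (cyc_succ n) (cyc_succ n j) = j"
  using bij_betw_inv_into_left[OF bij_betw_cyc_succ] by simp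

lemma cyc_succ_inv_into [simp]: "i < n \<Longrightarrow> cyc_succ n (inv_into {..<n} (cyc_succ n) i) = i"
  using bij_betw_inv_into_right[OF bij_betw_cyc_succ] by simp

lemma DF_index:
  "i < n \<Longrightarrow> j < n \<Longrightarrow>
    DF n $$ (i, j) = real n * ((if j = cyc_succ n i then 1 else 0) - (if i = j then 1 else 0))"
  unfolding DF_def cyc_succ_def by simp

lemma DB_index: "i < n \<Longrightarrow> j < n \<Longrightarrow> DB n $$ (i, j) = - DF n $$ (j, i)"
  unfolding DB_def DF_def by simp

lemma DF_carrier [simp]: "DF n \<in> carrier_mat n n"
  unfolding DF_def by simp

lemma DB_carrier [simp]: "DB n \<in> carrier_mat n n"
  unfolding DB_def by simp

lemma D2_carrier [simp]: "D2 n \<in> carrier_mat n n"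
  unfolding D2_def by (simp add: mult_carrier_mat[of _ n n _ n])

definition cyc_shift_mat :: "nat \<Rightarrow> real mat" where
  "cyc_shift_mat n = mat n n (\<lambda>(i, j). if j = cyc_succ n i then 1 else 0)"

lemma DF_eq_cyc_shift_mat: "DF n = real n \<cdot>\<^sub>m (cyc_shift_mat n - 1\<^sub>m n)"
  unfolding DF_def cyc_shift_mat_def cyc_succ_def by (intro eq_matI) auto

lemma DB_eq_cyc_shift_mat: "DB n = real n \<cdot>\<^sub>m (1\<^sub>m n - transpose_mat (cyc_shift_mat n))"
  unfolding DB_def DF_def cyc_shift_mat_def cyc_succ_def by (intro eq_matI) (auto simp: algebra_simps)

lemma op_bound_cyc_shift_mat: "op_bound (cyc_shift_mat n) 1"
  unfolding cyc_shift_mat_def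
  using bij_betw_cyc_succ[of n] by (intro op_bound_perm_pattern) (auto simp: bij_betwE)

lemma op_bound_transpose_cyc_shift_mat: "op_bound (transpose_mat (cyc_shift_mat n)) 1"
  unfolding cyc_shift_mat_def
  using bij_betw_inv_into[OF bij_betw_cyc_succ[of n]] by (intro op_bound_perm_pattern) auto

lemma op_bound_DF: "op_bound (DF n) (2 * real n)"
proof -
  have "op_bound (cyc_shift_mat n - 1\<^sub>m n) (1 + 1)"
    by (rule op_bound_diff[OF _ _ op_bound_cyc_shift_mat op_bound_one]) (auto simp: cyc_shift_mat_def)
  then have "op_bound (real n \<cdot>\<^sub>m (cyc_shift_mat n - 1\<^sub>m n)) (\<bar>real n\<bar> * (1 + 1))"
    by (rule op_bound_smult)
  then show ?thesis
    by (simp add: DF_eq_cyc_shift_mat mult.commute)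
qed

lemma op_bound_DB: "op_bound (DB n) (2 * real n)"
proof -
  have "op_bound (1\<^sub>m n - transpose_mat (cyc_shift_mat n)) (1 + 1)"
    by (rule op_bound_diff[OF _ _ op_bound_one op_bound_transpose_cyc_shift_mat])
      (auto simp: cyc_shift_mat_def)
  then have "op_bound (real n \<cdot>\<^sub>m (1\<^sub>m n - transpose_mat (cyc_shift_mat n))) (\<bar>real n\<bar> * (1 + 1))"
    by (rule op_bound_smult)
  then show ?thesis
    by (simp add: DB_eq_cyc_shift_mat mult.commute)
qed

lemma op_bound_commutator_DF_mat_diag:
  assumes incr: "\<And>j. j < n \<Longrightarrow> real n * \<bar>w (cyc_succ n j) - w j\<bar> \<le> C" and "0 \<le> C"
  shows "op_bound (commutator (DF n) (mat_diag n w)) C"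
  unfolding commutator_mat_diag[OF DF_carrier]
proof (rule op_bound_perm_pattern[OF _ bij_betw_cyc_succ])
  fix i
  assume "i < n"
  then show "\<bar>mat n n (\<lambda>(i, j). DF n $$ (i, j) * (w j - w i)) $$ (i, cyc_succ n i)\<bar> \<le> C"
    using incr[of i] \<open>0 \<le> C\<close>
    by (auto simp: DF_index abs_mult)
qed (use \<open>0 \<le> C\<close> in \<open>auto simp: DF_index\<close>)

lemma op_bound_commutator_DB_mat_diag:
  assumes incr: "\<And>j. j < n \<Longrightarrow> real n * \<bar>w (cyc_succ n j) - w j\<bar> \<le> C" and "0 \<le> C"
  shows "op_bound (commutator (DB n) (mat_diag n w)) C"
  unfolding commutator_mat_diag[OF DB_carrier]
proof (rule op_bound_perm_pattern[OF _ bij_betw_inv_into[OF bij_betw_cyc_succ]])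
  fix i
  assume "i < n"
  define j where "j = inv_into {..<n} (cyc_succ n) i"
  have "j < n" "cyc_succ n j = i"
    using \<open>i < n\<close> unfolding j_def by simp_all
  then show "\<bar>mat n n (\<lambda>(i, j). DB n $$ (i, j) * (w j - w i)) $$ (i, j)\<bar> \<le> C"
    using incr[of j] \<open>0 \<le> C\<close> \<open>i < n\<close>
    by (auto simp: DB_index DF_index abs_mult abs_minus_commute)
qed (use \<open>0 \<le> C\<close> in \<open>auto simp: DB_index DF_index\<close>)

lemma op_bound_commutator_Dk:
  assumes Y: "Y \<in> carrier_mat n n"
    and "op_bound (commutator (DF n) Y) C" "op_bound (commutator (DB n) Y) C" "0 \<le> C"
  shows "op_bound (commutator (Dk k n) Y) (real k * C * (2 * real n) ^ (k - 1))"
proof -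
  define X where "X = 2 * real n"
  have "0 \<le> X" and DF: "op_bound (DF n) X" and DB: "op_bound (DB n) X"
    unfolding X_def by (simp_all add: op_bound_DF op_bound_DB)
  have D2: "op_bound (D2 n) (X * X)"
    unfolding D2_def using DB DF \<open>0 \<le> X\<close> by (intro op_bound_mult[of _ n]) auto
  have "op_bound (commutator (D2 n) Y) (X * C + C * X)"
    unfolding D2_def using assms DB DF \<open>0 \<le> X\<close> by (intro op_bound_commutator_mult) auto
  then have "op_bound (commutator (D2 n ^\<^sub>m m) Y) (real m * (X * X) ^ (m - 1) * (X * C + C * X))" for m
    using D2 Y \<open>0 \<le> X\<close> \<open>0 \<le> C\<close> by (intro op_bound_commutator_pow) auto
  moreover have "real m * (X * X) ^ (m - 1) * (X * C + C * X) = real (2 * m) * C * X ^ (2 * m - 1)" for m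
  proof (cases m)
    case (Suc l)
    have "(X * X) ^ l = X ^ (2 * l)"
      by (metis power_mult power2_eq_square)
    then show ?thesis
      using Suc by (simp add: algebra_simps)
  qed simp
  ultimately have D2_pow: "op_bound (commutator (D2 n ^\<^sub>m m) Y) (real (2 * m) * C * X ^ (2 * m - 1))" for m
    by metis
  show ?thesis
  proof (cases "even k")
    case True
    then obtain m where "k = 2 * m"
      by blast
    then show ?thesis
      using D2_pow[of m] unfolding X_def Dk_def by simp
  next
    case False
    then obtain m where k: "k = 2 * m + 1"
      by (blast elim: oddE)
    have "op_bound (commutator (DF n * D2 n ^\<^sub>m m) Y)
        (X * (real (2 * m) * C * X ^ (2 * m - 1)) + C * (X * X) ^ m)"
      using assms DF D2 D2_pow \<open>0 \<le> X\<close> \<open>0 \<le> C\<close>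
      by (intro op_bound_commutator_mult[of _ n] op_bound_pow[of _ n]) auto
    moreover have "X * (real (2 * m) * C * X ^ (2 * m - 1)) + C * (X * X) ^ m = real k * C * X ^ (k - 1)"
    proof -
      have "(X * X) ^ m = X ^ (2 * m)"
        by (metis power_mult power2_eq_square)
      moreover have "real (2 * m) * X * X ^ (2 * m - 1) = real (2 * m) * X ^ (2 * m)"
        by (cases m) simp_all
      ultimately show ?thesis
        unfolding k by (simp add: algebra_simps)
    qed
    ultimately show ?thesis
      using False unfolding X_def Dk_def k by simp
  qed
qed

lemma smooth_fun_differentiable: "smooth_fun y \<Longrightarrow> y differentiable (at x)"
  unfolding smooth_fun_def by (metis funpow_0)

lemma smooth_fun_continuous_on_deriv: "smooth_fun y \<Longrightarrow> continuous_on S (deriv y)"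
  unfolding smooth_fun_def
  by (metis continuous_at_imp_continuous_on differentiable_imp_continuous_within funpow_0 funpow_Suc_right o_apply)

lemma lipschitz_on_Icc_if_continuous_deriv:
  fixes y :: "real \<Rightarrow> real"
  assumes "\<And>x. y differentiable (at x)" "continuous_on {a..b} (deriv y)"
  obtains L where "L-lipschitz_on {a..b} y"
proof -
  obtain L where "0 < L" and L: "\<And>x. x \<in> {a..b} \<Longrightarrow> norm (deriv y x) \<le> L"
    using compact_imp_bounded[OF compact_continuous_image[OF assms(2) compact_Icc]]
    by (auto simp: bounded_pos)
  have "norm (y s - y t) \<le> L * norm (s - t)" if "s \<in> {a..b}" "t \<in> {a..b}" for s t
    using that L assms(1)
    by (intro field_differentiable_bound[where f' = "deriv y", OF convex_real_interval(5)])
      (auto intro: has_field_derivative_at_within simp: DERIV_deriv_iff_real_differentiable)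
  with \<open>0 < L\<close> have "L-lipschitz_on {a..b} y"
    by (intro lipschitz_onI) (auto simp: dist_norm)
  then show ?thesis ..
qed

lemma grid_increment_le:
  assumes L: "L-lipschitz_on {a..b} y" and "periodic_fun (b - a) y" "a \<le> b" "j < N"
  shows "real N * \<bar>y (grid_pt a b N (cyc_succ N j)) - y (grid_pt a b N j)\<bar> \<le> L * (b - a)"
proof -
  have "y (grid_pt a b N (cyc_succ N j)) = y (grid_pt a b N (Suc j))"
  proof (cases "Suc j = N")
    case True
    have "y (a + (b - a)) = y a"
      using \<open>periodic_fun (b - a) y\<close> unfolding periodic_fun_def by blast
    then show ?thesis
      using True unfolding cyc_succ_def grid_pt_def by simp
  next
    case False
    then show ?thesis
      using \<open>j < N\<close> unfolding cyc_succ_def by simp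
  qed
  moreover have "grid_pt a b N i \<in> {a..b}" if "i \<le> N" for i
  proof -
    have "real i * (b - a) \<le> real N * (b - a)"
      using that \<open>a \<le> b\<close> by (intro mult_right_mono) auto
    then have "(b - a) * real i / real N \<le> b - a"
      using \<open>a \<le> b\<close> by (simp add: divide_le_eq mult.commute)
    then show ?thesis
      unfolding grid_pt_def using \<open>a \<le> b\<close> by (simp add: mult_nonneg_nonneg)
  qed
  ultimately have "\<bar>y (grid_pt a b N (cyc_succ N j)) - y (grid_pt a b N j)\<bar>
      \<le> L * \<bar>grid_pt a b N (Suc j) - grid_pt a b N j\<bar>"
    using lipschitz_onD[OF L] \<open>j < N\<close> by (simp add: dist_real_def)
  also have "\<dots> = L * (b - a) / real N"
    using \<open>a \<le> b\<close> \<open>j < N\<close> unfolding grid_pt_def by (simp add: field_simps)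
  finally show ?thesis
    using \<open>j < N\<close> by (simp add: field_simps)
qed

lemma op_bound_commutator_Dk_grid_diag:
  assumes L: "L-lipschitz_on {a..b} y" and "periodic_fun (b - a) y" "a \<le> b"
  shows "op_bound (commutator (Dk k N) (grid_diag y a b N)) (real k * (L * (b - a)) * (2 * real N) ^ (k - 1))"
proof -
  have Y: "grid_diag y a b N = mat_diag N (\<lambda>i. y (grid_pt a b N i))"
    unfolding grid_diag_def mat_diag_def by (intro eq_matI) auto
  have "0 \<le> L * (b - a)"
    using lipschitz_on_nonneg[OF L] \<open>a \<le> b\<close> by simp
  then show ?thesis
    unfolding Y using grid_increment_le[OF assms]
    by (intro op_bound_commutator_Dk op_bound_commutator_DF_mat_diag op_bound_commutator_DB_mat_diag) auto
qed

theorem lemma4p5: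
  fixes a b :: real and y :: "real \<Rightarrow> real" and k :: nat
  assumes "a < b" and "k \<ge> 1"
    and "smooth_fun y" and "periodic_fun (b - a) y"
  shows "height_le (\<lambda>N. Dk k N * grid_diag y a b N - grid_diag y a b N * Dk k N) (k - 1)"
proof -
  obtain L where L: "L-lipschitz_on {a..b} y"
    using lipschitz_on_Icc_if_continuous_deriv smooth_fun_differentiable smooth_fun_continuous_on_deriv
      \<open>smooth_fun y\<close> by metis
  define K where "K = real k * (L * (b - a)) * 2 ^ (k - 1)"
  have "0 \<le> K"
    unfolding K_def using lipschitz_on_nonneg[OF L] \<open>a < b\<close> by simp
  have "op_bound (commutator (Dk k N) (grid_diag y a b N)) (K * real N ^ (k - 1))" for N
    using op_bound_commutator_Dk_grid_diag[OF L \<open>periodic_fun (b - a) y\<close>, of k N] \<open>a < b\<close>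
    unfolding K_def by (simp add: power_mult_distrib mult_ac)
  then have "\<bar>opnorm2 (Dk k N * grid_diag y a b N - grid_diag y a b N * Dk k N)\<bar> \<le> K * real N ^ (k - 1)" for N
    using abs_opnorm2_le \<open>0 \<le> K\<close> unfolding commutator_def by simp
  then show ?thesis
    unfolding height_le_def by (intro bigoI[where c = K] always_eventually allI) simp
qed

end
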